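(* Let $K=(C,\langle Q_i,1\le i\le k\rangle)$ be a CMI in pure form, let $\mathbb I_K$ be its set of repeated indices, and let $P_j=Q_{i_j}\setminus\mathbb I_K$, $1\le j\le t$ (with $1\le i_1\le\dots\le i_t\le k$), be the nonempty sets among the $Q_i\setminus\mathbb I_K$. Then, for a given joint distribution of $X_1,\dots,X_n$, $K$ is valid if and only if both $(C,\langle\mathbb I_K,\mathbb I_K\rangle)$ and $(C,\langle P_i,1\le i\le t\rangle)$ are valid.
   Context: $X_1,\dots,X_n$ are jointly distributed discrete random variables with $H(X_i)<\infty$; $X_\alpha=(X_i,i\in\alpha)$, $X_\emptyset$ is a constant. A CMI $(C,\langle Q_1,\dots,Q_k\rangle)$, $k\ge0$, with $C\subseteq\{1,\dots,n\}$ and an unordered multiset of subsets $Q_i$, is valid for a given distribution if $\sum_{i=1}^kH(X_{Q_i}|X_C)-H(X_{Q_1},\dots,X_{Q_k}|X_C)=0$ (automatically when $k\le1$); empty members may be deleted. Thus $(C,\langle A,A\rangle)$ is valid iff $H(X_A|X_C)=0$. Pure form: all $Q_i\ne\emptyset$ and $Q_i\cap C=\emptyset$. Repeated indices: if $k\ge2$, $\mathbb I_K$ is the set of indices lying in at least two members (distinct positions) of the collection; $\mathbb I_K=\emptyset$ if $k\le1$. *)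

theory Defs
  imports "HOL-Probability.Probability"
begin

text \<open>A joint distribution of X_1,...,X_n is a discrete probability distribution p on
  outcomes \<omega> :: nat \<Rightarrow> 'v, with X_i(\<omega>) = \<omega> i.\<close>

definition proj :: "nat set \<Rightarrow> (nat \<Rightarrow> 'v) \<Rightarrow> (nat \<Rightarrow> 'v)" where
  "proj A \<omega> = (\<lambda>i. if i \<in> A then \<omega> i else undefined)"

definition ent_term :: "(nat \<Rightarrow> 'v) pmf \<Rightarrow> nat set \<Rightarrow> (nat \<Rightarrow> 'v) \<Rightarrow> real" where
  "ent_term p A y = (let q = pmf (map_pmf (proj A) p) y in - (q * log 2 q))"

definition finite_entropy :: "(nat \<Rightarrow> 'v) pmf \<Rightarrow> nat set \<Rightarrow> bool" where
  "finite_entropy p A \<longleftrightarrow> ent_term p A summable_on UNIV"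

definition H :: "(nat \<Rightarrow> 'v) pmf \<Rightarrow> nat set \<Rightarrow> real" where
  "H p A = infsum (ent_term p A) UNIV"

definition Hc :: "(nat \<Rightarrow> 'v) pmf \<Rightarrow> nat set \<Rightarrow> nat set \<Rightarrow> real" where
  "Hc p A C = H p (A \<union> C) - H p C"

definition cmi_valid :: "(nat \<Rightarrow> 'v) pmf \<Rightarrow> nat set \<Rightarrow> nat set list \<Rightarrow> bool" where
  "cmi_valid p C Qs \<longleftrightarrow>
     (\<Sum>i<length Qs. Hc p (Qs ! i) C) - Hc p (\<Union> (set Qs)) C = 0"

definition pure_form :: "nat set \<Rightarrow> nat set list \<Rightarrow> bool" where
  "pure_form C Qs \<longleftrightarrow> (\<forall>Q \<in> set Qs. Q \<noteq> {} \<and> Q \<inter> C = {})"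

definition repeated :: "nat set list \<Rightarrow> nat set" where
  "repeated Qs = {x. \<exists>i j. i < length Qs \<and> j < length Qs \<and> i \<noteq> j \<and> x \<in> Qs ! i \<and> x \<in> Qs ! j}"

end

theory Submission
  imports Defs
begin

text \<open>Everything is a statement about the set function \<open>g(S) = H(X\<^sub>S | X\<^sub>C)\<close>, which is a
  polymatroid: \<open>g({}) = 0\<close>, monotone and submodular. Adding the members \<open>Q\<^sub>1, ..., Q\<^sub>k\<close> one at
  a time and applying submodularity twice per step gives
  \<open>g(I\<^sub>K) \<le> \<Sum>\<^sub>i g(Q\<^sub>i) - g(Q\<^sub>1 \<union> ... \<union> Q\<^sub>k)\<close>, so validity of \<open>K\<close> forces \<open>g(I\<^sub>K) = 0\<close>.
  Once \<open>g(I\<^sub>K) = 0\<close>, submodularity shows that deleting \<open>I\<^sub>K\<close> from any set does not change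
  \<open>g\<close>, so \<open>K\<close> and \<open>(C, \<langle>P\<^sub>1, ..., P\<^sub>t\<rangle>)\<close> have the same left-hand side in the validity
  condition. Submodularity of entropy (Shannon's inequality) comes from \<open>ln w \<le> w - 1\<close> applied
  pointwise to \<open>w = p(x\<^sub>A) p(x\<^sub>B) / (p(x\<^bsub>A \<union> B\<^esub>) p(x\<^bsub>A \<inter> B\<^esub>))\<close>, whose expectation
  is at most 1.\<close>

section \<open>Polymatroids\<close>

definition total_correlation :: "('a set \<Rightarrow> real) \<Rightarrow> 'a set list \<Rightarrow> real" where
  "total_correlation f Qs = (\<Sum>Q\<leftarrow>Qs. f Q) - f (\<Union> (set Qs))"

locale polymatroid =
  fixes U :: "'a set" and f :: "'a set \<Rightarrow> real"
  assumes empty [simp]: "f {} = 0"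
    and mono: "X \<subseteq> Y \<Longrightarrow> Y \<subseteq> U \<Longrightarrow> f X \<le> f Y"
    and submodular: "X \<subseteq> U \<Longrightarrow> Y \<subseteq> U \<Longrightarrow> f (X \<union> Y) + f (X \<inter> Y) \<le> f X + f Y"
begin

lemma nonneg: "X \<subseteq> U \<Longrightarrow> 0 \<le> f X"
  using mono[of "{}" X] by simp

lemma conditional:
  assumes "C \<subseteq> U"
  shows "polymatroid U (\<lambda>X. f (X \<union> C) - f C)"
proof
  fix X Y assume "X \<subseteq> U" "Y \<subseteq> U"
  then have "f ((X \<union> C) \<union> (Y \<union> C)) + f ((X \<union> C) \<inter> (Y \<union> C)) \<le> f (X \<union> C) + f (Y \<union> C)"
    using assms by (intro submodular) auto
  moreover have "(X \<union> C) \<union> (Y \<union> C) = (X \<union> Y) \<union> C" "(X \<union> C) \<inter> (Y \<union> C) = (X \<inter> Y) \<union> C"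
    by auto
  ultimately show "f (X \<union> Y \<union> C) - f C + (f (X \<inter> Y \<union> C) - f C)
      \<le> f (X \<union> C) - f C + (f (Y \<union> C) - f C)"
    by simp
qed (use assms in \<open>auto intro: mono\<close>)

lemma diff_null_eq:
  assumes "I \<subseteq> U" "f I = 0" "X \<subseteq> U"
  shows "f (X - I) = f X"
proof -
  have "(X - I) \<union> (X \<inter> I) = X" "(X - I) \<inter> (X \<inter> I) = {}"
    by auto
  then have "f X \<le> f (X - I) + f (X \<inter> I)"
    using submodular[of "X - I" "X \<inter> I"] assms(3) by auto
  also have "f (X \<inter> I) \<le> f I"
    using assms by (intro mono) auto
  finally show ?thesis
    using mono[of "X - I" X] assms by simp
qed

lemma total_correlation_diff_null:
  assumes "I \<subseteq> U" "f I = 0" "\<forall>Q\<in>set Qs. Q \<subseteq> U"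
  shows "total_correlation f (filter (\<lambda>S. S \<noteq> {}) (map (\<lambda>Q. Q - I) Qs)) = total_correlation f Qs"
    (is "total_correlation f ?Ps = _")
proof -
  have "(\<Sum>P\<leftarrow>?Ps. f P) = (\<Sum>Q\<leftarrow>Qs. f (Q - I))"
    by (subst sum_list_map_filter) (simp_all add: comp_def)
  also have "\<dots> = (\<Sum>Q\<leftarrow>Qs. f Q)"
    using assms by (intro arg_cong[where f = sum_list] map_cong) (auto simp: diff_null_eq)
  finally have "(\<Sum>P\<leftarrow>?Ps. f P) = (\<Sum>Q\<leftarrow>Qs. f Q)" .
  moreover have "\<Union> (set ?Ps) = \<Union> (set Qs) - I"
    by auto
  ultimately show ?thesis
    using assms diff_null_eq[of I "\<Union> (set Qs)"] by (auto simp: total_correlation_def)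
qed

end

lemma repeated_Nil [simp]: "repeated [] = {}"
  unfolding repeated_def by simp

lemma repeated_Cons: "repeated (Q # Qs) = repeated Qs \<union> (Q \<inter> \<Union> (set Qs))"
proof (rule set_eqI, rule iffI)
  fix x assume "x \<in> repeated (Q # Qs)"
  then obtain i j where "i < Suc (length Qs)" "j < Suc (length Qs)" "i \<noteq> j"
      "x \<in> (Q # Qs) ! i" "x \<in> (Q # Qs) ! j"
    unfolding repeated_def by auto
  then show "x \<in> repeated Qs \<union> (Q \<inter> \<Union> (set Qs))"
    by (cases i; cases j) (auto simp: repeated_def)
next
  fix x assume "x \<in> repeated Qs \<union> (Q \<inter> \<Union> (set Qs))"
  then show "x \<in> repeated (Q # Qs)"
  proof
    assume "x \<in> repeated Qs"
    then show ?thesis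
      unfolding repeated_def by (force intro: exI[of _ "Suc _"])
  next
    assume "x \<in> Q \<inter> \<Union> (set Qs)"
    then obtain j where "j < length Qs" "x \<in> Qs ! j" "x \<in> Q"
      by (auto simp: in_set_conv_nth)
    then show ?thesis
      unfolding repeated_def by (intro CollectI exI[of _ 0] exI[of _ "Suc j"]) auto
  qed
qed

lemma repeated_subset_Union: "repeated Qs \<subseteq> \<Union> (set Qs)"
  unfolding repeated_def using nth_mem by blast

lemma polymatroid_repeated_le_total_correlation:
  fixes f :: "nat set \<Rightarrow> real"
  assumes "polymatroid U f" and "\<forall>Q\<in>set Qs. Q \<subseteq> U"
  shows "f (repeated Qs) \<le> total_correlation f Qs"
  using assms(2)
proof (induction Qs)
  case Nil
  then show ?case
    using assms(1) by (simp add: total_correlation_def polymatroid.empty)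
next
  case (Cons Q Qs)
  interpret polymatroid U f by fact
  define V where "V = \<Union> (set Qs)"
  define R where "R = repeated Qs"
  have "Q \<subseteq> U" "V \<subseteq> U" "R \<subseteq> U" "Q \<inter> V \<subseteq> U" "Q \<inter> V \<inter> R \<subseteq> U"
    using Cons.prems repeated_subset_Union[of Qs] by (auto simp: V_def R_def)
  have "f (repeated (Q # Qs)) = f ((Q \<inter> V) \<union> R)"
    unfolding repeated_Cons V_def R_def by (simp add: Un_commute)
  also have "\<dots> \<le> f (Q \<inter> V) + f R"
    using submodular[of "Q \<inter> V" R] nonneg[of "Q \<inter> V \<inter> R"] \<open>R \<subseteq> U\<close> \<open>Q \<inter> V \<subseteq> U\<close>
      \<open>Q \<inter> V \<inter> R \<subseteq> U\<close>
    by linarith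
  also have "\<dots> \<le> f Q + f V - f (Q \<union> V) + f R"
    using submodular[of Q V] \<open>Q \<subseteq> U\<close> \<open>V \<subseteq> U\<close> by simp
  also have "\<dots> \<le> f Q + (\<Sum>S\<leftarrow>Qs. f S) - f (Q \<union> V)"
    using Cons by (simp add: total_correlation_def V_def R_def)
  finally show ?case
    by (simp add: total_correlation_def V_def)
qed


section \<open>Shannon entropy is a polymatroid\<close>

lemma summable_on_iff_nn_integral_finite:
  fixes f :: "'a \<Rightarrow> real"
  assumes "\<And>x. 0 \<le> f x"
  shows "f summable_on UNIV \<longleftrightarrow> (\<integral>\<^sup>+x. ennreal (f x) \<partial>count_space UNIV) < \<infinity>"
proof -
  have "f summable_on UNIV \<longleftrightarrow> Infinite_Set_Sum.abs_summable_on f UNIV"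
    using summable_on_iff_abs_summable_on_real abs_summable_equivalent by blast
  then show ?thesis
    unfolding abs_summable_on_def integrable_iff_bounded using assms by simp
qed

lemma infsum_eq_enn2real_nn_integral:
  fixes f :: "'a \<Rightarrow> real"
  assumes "\<And>x. 0 \<le> f x" and "(\<integral>\<^sup>+x. ennreal (f x) \<partial>count_space UNIV) < \<infinity>"
  shows "infsum f UNIV = enn2real (\<integral>\<^sup>+x. ennreal (f x) \<partial>count_space UNIV)"
proof -
  have "Infinite_Set_Sum.abs_summable_on f UNIV"
    using assms by (simp add: abs_summable_on_def integrable_iff_bounded)
  then have "infsum f UNIV = infsetsum f UNIV"
    by (metis infsetsum_infsum)
  then show ?thesis
    using assms infsetsum_conv_nn_integral[of UNIV f] by simp
qed

lemma log2_nonpos: "0 \<le> q \<Longrightarrow> q \<le> 1 \<Longrightarrow> log 2 q \<le> 0"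
  by (cases "q = 0") (auto simp: log_def divide_nonpos_pos)

lemma log2_le_minus_one: "0 < w \<Longrightarrow> log 2 w \<le> (w - 1) / ln 2"
  using ln_le_minus_one[of w] by (simp add: log_def divide_right_mono)

lemma proj_proj: "M \<subseteq> A \<Longrightarrow> proj M (proj A \<omega>) = proj M \<omega>"
  unfolding proj_def by (auto simp: fun_eq_iff)

lemma proj_eq_iff: "proj A x = proj A y \<longleftrightarrow> (\<forall>i\<in>A. x i = y i)"
  unfolding proj_def by (auto simp: fun_eq_iff)

definition marginal_prob :: "(nat \<Rightarrow> 'v) pmf \<Rightarrow> nat set \<Rightarrow> (nat \<Rightarrow> 'v) \<Rightarrow> real" where
  "marginal_prob p A \<omega> = pmf (map_pmf (proj A) p) (proj A \<omega>)"

definition surprisal :: "(nat \<Rightarrow> 'v) pmf \<Rightarrow> nat set \<Rightarrow> (nat \<Rightarrow> 'v) \<Rightarrow> real" where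
  "surprisal p A \<omega> = - log 2 (marginal_prob p A \<omega>)"

text \<open>Entropy as expected surprisal, valued in \<open>[0, \<infinity>]\<close> so that its submodularity can be proved
  before finiteness is known.\<close>
definition entropy_enn :: "(nat \<Rightarrow> 'v) pmf \<Rightarrow> nat set \<Rightarrow> ennreal" where
  "entropy_enn p A = (\<integral>\<^sup>+\<omega>. ennreal (surprisal p A \<omega>) \<partial>p)"

lemma marginal_prob_eq_measure: "marginal_prob p A \<omega> = measure p {\<omega>'. \<forall>i\<in>A. \<omega>' i = \<omega> i}"
  unfolding marginal_prob_def pmf_map by (simp add: vimage_def proj_eq_iff)

lemma marginal_prob_nonneg: "0 \<le> marginal_prob p A \<omega>"
  unfolding marginal_prob_def by simp

lemma marginal_prob_le_1: "marginal_prob p A \<omega> \<le> 1"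
  unfolding marginal_prob_def by (simp add: pmf_le_1)

lemma marginal_prob_pos: "\<omega> \<in> set_pmf p \<Longrightarrow> 0 < marginal_prob p A \<omega>"
  unfolding marginal_prob_def by (simp add: pmf_positive)

lemma marginal_prob_antimono: "A \<subseteq> B \<Longrightarrow> marginal_prob p B \<omega> \<le> marginal_prob p A \<omega>"
  unfolding marginal_prob_eq_measure by (rule measure_pmf.finite_measure_mono) auto

lemma marginal_prob_proj: "M \<subseteq> A \<Longrightarrow> marginal_prob p M (proj A \<omega>) = marginal_prob p M \<omega>"
  unfolding marginal_prob_def by (simp add: proj_proj)

lemma surprisal_nonneg: "0 \<le> surprisal p A \<omega>"
  unfolding surprisal_def using log2_nonpos[OF marginal_prob_nonneg marginal_prob_le_1] by simp

lemma ent_term_nonneg: "0 \<le> ent_term p A y"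
  unfolding ent_term_def Let_def
  using mult_nonneg_nonpos[OF pmf_nonneg log2_nonpos[OF pmf_nonneg pmf_le_1]] by simp

lemma entropy_enn_eq_nn_integral_ent_term:
  "entropy_enn p A = (\<integral>\<^sup>+y. ennreal (ent_term p A y) \<partial>count_space UNIV)"
proof -
  define q where "q = map_pmf (proj A) p"
  have "entropy_enn p A = (\<integral>\<^sup>+y. ennreal (- log 2 (pmf q y)) \<partial>q)"
    unfolding entropy_enn_def surprisal_def marginal_prob_def q_def by simp
  also have "\<dots> = (\<integral>\<^sup>+y. ennreal (pmf q y) * ennreal (- log 2 (pmf q y)) \<partial>count_space UNIV)"
    by (rule nn_integral_measure_pmf)
  also have "\<dots> = (\<integral>\<^sup>+y. ennreal (ent_term p A y) \<partial>count_space UNIV)"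
  proof (rule nn_integral_cong)
    fix y
    show "ennreal (pmf q y) * ennreal (- log 2 (pmf q y)) = ennreal (ent_term p A y)"
      unfolding ent_term_def Let_def q_def[symmetric]
      using log2_nonpos[OF pmf_nonneg pmf_le_1, of q y] by (simp add: ennreal_mult[symmetric])
  qed
  finally show ?thesis .
qed

lemma finite_entropy_iff_entropy_enn: "finite_entropy p A \<longleftrightarrow> entropy_enn p A < \<infinity>"
  unfolding finite_entropy_def entropy_enn_eq_nn_integral_ent_term
  by (rule summable_on_iff_nn_integral_finite) (rule ent_term_nonneg)

lemma H_eq_enn2real_entropy_enn: "entropy_enn p A < \<infinity> \<Longrightarrow> H p A = enn2real (entropy_enn p A)"
  unfolding H_def entropy_enn_eq_nn_integral_ent_term
  by (rule infsum_eq_enn2real_nn_integral) (rule ent_term_nonneg)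

lemma entropy_enn_empty [simp]: "entropy_enn p {} = 0"
  unfolding entropy_enn_def surprisal_def marginal_prob_eq_measure by simp

lemma entropy_enn_mono: "A \<subseteq> B \<Longrightarrow> entropy_enn p A \<le> entropy_enn p B"
  unfolding entropy_enn_def surprisal_def
proof (intro nn_integral_mono_AE AE_pmfI ennreal_leI)
  fix \<omega> assume "A \<subseteq> B" "\<omega> \<in> set_pmf p"
  then show "- log 2 (marginal_prob p A \<omega>) \<le> - log 2 (marginal_prob p B \<omega>)"
    using marginal_prob_pos[of \<omega> p B] marginal_prob_antimono[of A B p \<omega>] by simp
qed

lemma nn_integral_pmf_ratio_le:
  fixes q :: "'a pmf" and f :: "'a \<Rightarrow> real"
  assumes "\<And>z. 0 \<le> f z"
  shows "(\<integral>\<^sup>+z. ennreal (f z / pmf q z) \<partial>q) \<le> (\<integral>\<^sup>+z. ennreal (f z) \<partial>count_space UNIV)"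
proof -
  have "(\<integral>\<^sup>+z. ennreal (f z / pmf q z) \<partial>q)
      = (\<integral>\<^sup>+z. ennreal (pmf q z) * ennreal (f z / pmf q z) \<partial>count_space UNIV)"
    by (rule nn_integral_measure_pmf)
  also have "\<dots> \<le> (\<integral>\<^sup>+z. ennreal (f z) \<partial>count_space UNIV)"
  proof (rule nn_integral_mono)
    fix z
    show "ennreal (pmf q z) * ennreal (f z / pmf q z) \<le> ennreal (f z)"
      using assms[of z] by (cases "pmf q z = 0") (simp_all add: ennreal_mult[symmetric])
  qed
  finally show ?thesis .
qed

lemma emeasure_marginal_agree:
  assumes "M \<subseteq> B"
  shows "emeasure (map_pmf (proj B) p) {y. proj M y = proj M x} = marginal_prob p M x"
proof -
  have "proj B -` {y. proj M y = proj M x} = {\<omega>. \<forall>i\<in>M. \<omega> i = x i}"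
    using assms by (auto simp: proj_def fun_eq_iff)
  then show ?thesis
    by (simp add: marginal_prob_eq_measure measure_pmf.emeasure_eq_measure)
qed

text \<open>The integrand is the likelihood ratio, against the joint law of \<open>(X\<^sub>A, X\<^sub>B)\<close>, of the
  coupling \<open>p(a) p(b) / p(a\<^bsub>A \<inter> B\<^esub>)\<close> (on pairs agreeing on \<open>A \<inter> B\<close>) that makes them
  conditionally independent given \<open>X\<^bsub>A \<inter> B\<^esub>\<close>; that coupling has total mass at most 1.\<close>
lemma nn_integral_marginal_ratio_le_1:
  fixes p :: "(nat \<Rightarrow> 'v) pmf"
  shows "(\<integral>\<^sup>+\<omega>. ennreal (marginal_prob p A \<omega> * marginal_prob p B \<omega> /
      (marginal_prob p (A \<union> B) \<omega> * marginal_prob p (A \<inter> B) \<omega>)) \<partial>p) \<le> 1"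
proof -
  define M where "M = A \<inter> B"
  define qA where "qA = map_pmf (proj A) p"
  define qB where "qB = map_pmf (proj B) p"
  define \<psi> where "\<psi> \<omega> = (proj A \<omega>, proj B \<omega>)" for \<omega> :: "nat \<Rightarrow> 'v"
  define g where
    "g z = (if proj M (fst z) = proj M (snd z) then 1 / marginal_prob p M (fst z) else 0)" for z
  have "M \<subseteq> A" "M \<subseteq> B"
    unfolding M_def by auto
  have joint: "marginal_prob p (A \<union> B) \<omega> = pmf (map_pmf \<psi> p) (\<psi> \<omega>)" for \<omega>
  proof -
    have "{\<omega>'. \<forall>i\<in>A \<union> B. \<omega>' i = \<omega> i} = \<psi> -` {\<psi> \<omega>}"
      unfolding \<psi>_def by (auto simp: proj_eq_iff)
    then show ?thesis
      unfolding marginal_prob_eq_measure pmf_map by simp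
  qed
  have ratio: "marginal_prob p A \<omega> * marginal_prob p B \<omega> /
        (marginal_prob p (A \<union> B) \<omega> * marginal_prob p M \<omega>)
      = pmf (pair_pmf qA qB) (\<psi> \<omega>) * g (\<psi> \<omega>) / pmf (map_pmf \<psi> p) (\<psi> \<omega>)" for \<omega>
    unfolding joint[symmetric] using \<open>M \<subseteq> A\<close>
    by (simp add: pmf_pair g_def \<psi>_def qA_def qB_def marginal_prob_def[of p A]
        marginal_prob_def[of p B] marginal_prob_proj proj_proj[OF \<open>M \<subseteq> A\<close>]
        proj_proj[OF \<open>M \<subseteq> B\<close>])
  have "(\<integral>\<^sup>+\<omega>. ennreal (marginal_prob p A \<omega> * marginal_prob p B \<omega> /
      (marginal_prob p (A \<union> B) \<omega> * marginal_prob p M \<omega>)) \<partial>p)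
      = (\<integral>\<^sup>+z. ennreal (pmf (pair_pmf qA qB) z * g z / pmf (map_pmf \<psi> p) z) \<partial>map_pmf \<psi> p)"
    unfolding ratio by simp
  also have "\<dots> \<le> (\<integral>\<^sup>+z. ennreal (pmf (pair_pmf qA qB) z * g z) \<partial>count_space UNIV)"
    by (rule nn_integral_pmf_ratio_le) (simp add: g_def marginal_prob_nonneg)
  also have "\<dots> = (\<integral>\<^sup>+z. ennreal (g z) \<partial>pair_pmf qA qB)"
    by (simp add: nn_integral_measure_pmf ennreal_mult g_def marginal_prob_nonneg)
  also have "\<dots> = (\<integral>\<^sup>+x. \<integral>\<^sup>+y. ennreal (g (x, y)) \<partial>qB \<partial>qA)"
    by (rule nn_integral_pair_pmf')
  also have "\<dots> \<le> (\<integral>\<^sup>+x. 1 \<partial>qA)"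
  proof (rule nn_integral_mono)
    fix x
    have agree: "emeasure qB {y. proj M y = proj M x} = marginal_prob p M x"
      unfolding qB_def using \<open>M \<subseteq> B\<close> by (rule emeasure_marginal_agree)
    have "(\<integral>\<^sup>+y. ennreal (g (x, y)) \<partial>qB)
        = (\<integral>\<^sup>+y. ennreal (1 / marginal_prob p M x) * indicator {y. proj M y = proj M x} y \<partial>qB)"
      unfolding g_def by (intro nn_integral_cong) (auto simp: indicator_def)
    also have "\<dots> = ennreal (1 / marginal_prob p M x) * emeasure qB {y. proj M y = proj M x}"
      by (rule nn_integral_cmult_indicator) simp
    also have "\<dots> \<le> 1"
      unfolding agree
      by (simp add: marginal_prob_nonneg marginal_prob_le_1 ennreal_mult[symmetric])
    finally show "(\<integral>\<^sup>+y. ennreal (g (x, y)) \<partial>qB) \<le> 1" .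
  qed
  finally show ?thesis
    by (simp add: M_def)
qed

lemma surprisal_submodular_pointwise:
  assumes "\<omega> \<in> set_pmf p"
  shows "surprisal p (A \<union> B) \<omega> + surprisal p (A \<inter> B) \<omega> + 1 / ln 2
    \<le> surprisal p A \<omega> + surprisal p B \<omega> + (1 / ln 2) *
      (marginal_prob p A \<omega> * marginal_prob p B \<omega> /
       (marginal_prob p (A \<union> B) \<omega> * marginal_prob p (A \<inter> B) \<omega>))"
proof -
  define w where "w = marginal_prob p A \<omega> * marginal_prob p B \<omega> /
    (marginal_prob p (A \<union> B) \<omega> * marginal_prob p (A \<inter> B) \<omega>)"
  have pos: "0 < marginal_prob p X \<omega>" for X
    using assms by (rule marginal_prob_pos)
  have "log 2 w =
      - surprisal p A \<omega> - surprisal p B \<omega> + surprisal p (A \<union> B) \<omega> + surprisal p (A \<inter> B) \<omega>"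
    unfolding w_def surprisal_def using pos[of A] pos[of B] pos[of "A \<union> B"] pos[of "A \<inter> B"]
    by (simp add: log_mult log_divide)
  moreover have "log 2 w \<le> (w - 1) / ln 2"
    using pos by (intro log2_le_minus_one) (simp add: w_def)
  ultimately show ?thesis
    unfolding w_def[symmetric] by (simp add: diff_divide_distrib)
qed

lemma entropy_enn_submodular:
  "entropy_enn p (A \<union> B) + entropy_enn p (A \<inter> B) \<le> entropy_enn p A + entropy_enn p B"
proof -
  \<comment> \<open>\<open>ennreal\<close> has no subtraction, so the constant \<open>c\<close> coming from \<open>ln w \<le> w - 1\<close> is kept on
    both sides and cancelled at the end.\<close>
  define c where "c = 1 / ln (2::real)"
  define W where "W \<omega> = marginal_prob p A \<omega> * marginal_prob p B \<omega> /
    (marginal_prob p (A \<union> B) \<omega> * marginal_prob p (A \<inter> B) \<omega>)" for \<omega>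
  have "0 < c"
    unfolding c_def by simp
  have "0 \<le> W \<omega>" for \<omega>
    unfolding W_def by (simp add: marginal_prob_nonneg)
  have "entropy_enn p (A \<union> B) + entropy_enn p (A \<inter> B) + ennreal c
     = (\<integral>\<^sup>+\<omega>. ennreal (surprisal p (A \<union> B) \<omega>) + ennreal (surprisal p (A \<inter> B) \<omega>) +
        ennreal c \<partial>p)"
    unfolding entropy_enn_def by (simp add: nn_integral_add)
  also have "\<dots> \<le> (\<integral>\<^sup>+\<omega>. ennreal (surprisal p A \<omega>) + ennreal (surprisal p B \<omega>) +
      ennreal c * ennreal (W \<omega>) \<partial>p)"
  proof (rule nn_integral_mono_AE, rule AE_pmfI)
    fix \<omega> assume "\<omega> \<in> set_pmf p"
    then have "surprisal p (A \<union> B) \<omega> + surprisal p (A \<inter> B) \<omega> + c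
        \<le> surprisal p A \<omega> + surprisal p B \<omega> + c * W \<omega>"
      unfolding c_def W_def by (rule surprisal_submodular_pointwise)
    then show "ennreal (surprisal p (A \<union> B) \<omega>) + ennreal (surprisal p (A \<inter> B) \<omega>) + ennreal c
        \<le> ennreal (surprisal p A \<omega>) + ennreal (surprisal p B \<omega>) + ennreal c * ennreal (W \<omega>)"
      using surprisal_nonneg[of p] \<open>0 < c\<close> \<open>0 \<le> W \<omega>\<close>
      by (simp add: ennreal_plus[symmetric] ennreal_mult[symmetric] del: ennreal_plus)
  qed
  also have "\<dots> = entropy_enn p A + entropy_enn p B + ennreal c * (\<integral>\<^sup>+\<omega>. ennreal (W \<omega>) \<partial>p)"
    unfolding entropy_enn_def by (simp add: nn_integral_add nn_integral_cmult)
  also have "\<dots> \<le> entropy_enn p A + entropy_enn p B + ennreal c"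
    using nn_integral_marginal_ratio_le_1[of p A B] mult_left_mono[of _ 1 "ennreal c"]
    unfolding W_def by (simp add: add_left_mono)
  finally show ?thesis
    by (simp add: ennreal_add_left_cancel_le add_ac)
qed

lemma entropy_enn_finite:
  assumes "finite X" and "\<And>i. i \<in> X \<Longrightarrow> finite_entropy p {i}"
  shows "entropy_enn p X < \<infinity>"
  using assms
proof (induction X rule: finite_induct)
  case empty
  then show ?case by simp
next
  case (insert i X)
  have "entropy_enn p (insert i X) \<le> entropy_enn p ({i} \<union> X) + entropy_enn p ({i} \<inter> X)"
    by simp
  also have "\<dots> \<le> entropy_enn p {i} + entropy_enn p X"
    by (rule entropy_enn_submodular)
  also have "\<dots> < \<infinity>"
    using insert by (simp add: finite_entropy_iff_entropy_enn)
  finally show ?case .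
qed

lemma polymatroid_H:
  assumes "finite U" and "\<And>i. i \<in> U \<Longrightarrow> finite_entropy p {i}"
  shows "polymatroid U (H p)"
proof
  have fin: "entropy_enn p X < \<infinity>" if "X \<subseteq> U" for X
    using assms that by (intro entropy_enn_finite) (auto intro: finite_subset)
  show "H p {} = 0"
    by (simp add: H_eq_enn2real_entropy_enn)
  show "H p X \<le> H p Y" if "X \<subseteq> Y" "Y \<subseteq> U" for X Y
    using that fin[of X] fin[of Y] entropy_enn_mono[of X Y p]
    by (simp add: H_eq_enn2real_entropy_enn enn2real_mono)
  show "H p (X \<union> Y) + H p (X \<inter> Y) \<le> H p X + H p Y" if "X \<subseteq> U" "Y \<subseteq> U" for X Y
  proof -
    have "X \<union> Y \<subseteq> U" "X \<inter> Y \<subseteq> U"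
      using that by auto
    then have "enn2real (entropy_enn p (X \<union> Y) + entropy_enn p (X \<inter> Y))
        \<le> enn2real (entropy_enn p X + entropy_enn p Y)"
      using that fin by (intro enn2real_mono entropy_enn_submodular) auto
    then show ?thesis
      using that \<open>X \<union> Y \<subseteq> U\<close> \<open>X \<inter> Y \<subseteq> U\<close> fin
      by (simp add: enn2real_plus H_eq_enn2real_entropy_enn)
  qed
qed

lemma cmi_valid_iff_total_correlation:
  "cmi_valid p C Qs \<longleftrightarrow> total_correlation (\<lambda>X. Hc p X C) Qs = 0"
  unfolding cmi_valid_def total_correlation_def by (simp add: sum_list_sum_nth atLeast0LessThan)

theorem mainTheorem15:
  fixes p :: "(nat \<Rightarrow> 'v) pmf" and n :: nat and C :: "nat set" and Qs :: "nat set list"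
  assumes fin: "\<And>i. i \<in> {1..n} \<Longrightarrow> finite_entropy p {i}"
    and C_sub: "C \<subseteq> {1..n}"
    and Q_sub: "\<And>Q. Q \<in> set Qs \<Longrightarrow> Q \<subseteq> {1..n}"
    and pure: "pure_form C Qs"
  shows "cmi_valid p C Qs \<longleftrightarrow>
           (cmi_valid p C [repeated Qs, repeated Qs] \<and>
            cmi_valid p C (filter (\<lambda>S. S \<noteq> {}) (map (\<lambda>Q. Q - repeated Qs) Qs)))"
proof -
  define f where "f X = Hc p X C" for X
  have "polymatroid {1..n} (H p)"
    using fin by (intro polymatroid_H) auto
  then interpret polymatroid "{1..n}" f
    unfolding f_def Hc_def using C_sub by (rule polymatroid.conditional)
  have Qs_sub: "\<forall>Q\<in>set Qs. Q \<subseteq> {1..n}"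
    using Q_sub by blast
  have I_sub: "repeated Qs \<subseteq> {1..n}"
    using repeated_subset_Union Qs_sub by blast
  have "0 \<le> f (repeated Qs)" "f (repeated Qs) \<le> total_correlation f Qs"
    using nonneg[OF I_sub] polymatroid_repeated_le_total_correlation[OF polymatroid_axioms Qs_sub]
    by auto
  moreover have "cmi_valid p C [repeated Qs, repeated Qs] \<longleftrightarrow> f (repeated Qs) = 0"
    unfolding cmi_valid_iff_total_correlation total_correlation_def f_def by simp
  ultimately show ?thesis
    unfolding cmi_valid_iff_total_correlation f_def[symmetric]
    using total_correlation_diff_null[OF I_sub _ Qs_sub] by fastforce
qed

end
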